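(* For real numbers $t_1,t_2,t_3$, let $$\rho_{AB}=\tfrac18\,\mathbb{1}_2\otimes\mathbb{1}_4+\tfrac14\big(t_1\,\sigma_1\otimes\lambda_1+t_2\,\sigma_2\otimes\lambda_{13}+t_3\,\sigma_3\otimes\lambda_3\big).$$ Suppose there exist nonzero real numbers $\alpha_1,\alpha_2,\alpha_3$ with $$\alpha_1^2+\alpha_2^2+\alpha_3^2\le1,\qquad \frac{t_1^2}{\alpha_1^2}+\frac{t_3^2}{\alpha_3^2}\le\frac14,\qquad \frac{t_2^2}{\alpha_2^2}\le\frac14 .$$ Then $\rho_{AB}$ is a separable state. Explicitly, put $\beta_\mu=t_\mu/\alpha_\mu$ and define four sign patterns $$\vec\epsilon^{(1)}=(1,-1,-1),\quad \vec\epsilon^{(2)}=(-1,-1,1),\quad \vec\epsilon^{(3)}=(-1,1,-1),\quad \vec\epsilon^{(4)}=(1,1,1).$$ Then $\rho_{AB}=\sum_{i=1}^4\frac14\,\rho_i^{(A)}\otimes\rho_i^{(B)}$, where $$\rho_i^{(A)}=\tfrac12\mathbb{1}+\tfrac12\big(\epsilon^{(i)}_1\alpha_1\sigma_1+\epsilon^{(i)}_2\alpha_2\sigma_2+\epsilon^{(i)}_3\alpha_3\sigma_3\big),$$ $$\rho_i^{(B)}=\tfrac14\mathbb{1}+\tfrac12\big(\epsilon^{(i)}_1\beta_1\lambda_1+\epsilon^{(i)}_2\beta_2\lambda_{13}+\epsilon^{(i)}_3\beta_3\lambda_3\big),$$ and all of these are density matrices.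
   Context: $\sigma_1,\sigma_2,\sigma_3$ are the Pauli matrices. With $\{|1\rangle,|2\rangle,|3\rangle,|4\rangle\}$ the standard basis of $\mathbb{C}^4$, the SU(4) generalized Gell-Mann matrices used here are: - $\lambda_1=|1\rangle\langle2|+|2\rangle\langle1|$, - $\lambda_3=|1\rangle\langle1|-|2\rangle\langle2|$, - $\lambda_{13}=|3\rangle\langle4|+|4\rangle\langle3|$. A state is separable if it is a convex combination of tensor products of density matrices. *)

theory Defs
  imports Complex_Main "Jordan_Normal_Form.Matrix"
begin

definition mat_trace :: "complex mat \<Rightarrow> complex" where
  "mat_trace A = (\<Sum>i<dim_row A. A $$ (i, i))"

definition hermitian :: "complex mat \<Rightarrow> bool" where
  "hermitian A \<longleftrightarrow> dim_row A = dim_col A \<and>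
     (\<forall>i<dim_row A. \<forall>j<dim_col A. A $$ (j, i) = cnj (A $$ (i, j)))"

text \<open>Positive semidefinite: the Hermitian form v^* A v is nonnegative (it is real for
  Hermitian A).\<close>
definition positive_semidef :: "complex mat \<Rightarrow> bool" where
  "positive_semidef A \<longleftrightarrow> hermitian A \<and>
     (\<forall>v \<in> carrier_vec (dim_row A).
        0 \<le> Re (\<Sum>i<dim_row A. \<Sum>j<dim_row A. cnj (v $ i) * A $$ (i, j) * v $ j))"

definition density_matrix :: "nat \<Rightarrow> complex mat \<Rightarrow> bool" where
  "density_matrix n A \<longleftrightarrow> A \<in> carrier_mat n n \<and> positive_semidef A \<and> mat_trace A = 1"

text \<open>Kronecker (tensor) product: (A \<otimes> B)_{(i,k),(j,l)} = A_{ij} B_{kl}, with the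
  composite index (i,k) encoded as i * dim B + k.\<close>
definition kron :: "complex mat \<Rightarrow> complex mat \<Rightarrow> complex mat" where
  "kron A B = mat (dim_row A * dim_row B) (dim_col A * dim_col B)
     (\<lambda>(r, c). A $$ (r div dim_row B, c div dim_col B) * B $$ (r mod dim_row B, c mod dim_col B))"

definition separable :: "nat \<Rightarrow> nat \<Rightarrow> complex mat \<Rightarrow> bool" where
  "separable n m \<rho> \<longleftrightarrow>
     (\<exists>(k::nat) (p::nat \<Rightarrow> real) (A::nat \<Rightarrow> complex mat) (B::nat \<Rightarrow> complex mat).
        (\<forall>i<k. 0 \<le> p i \<and> density_matrix n (A i) \<and> density_matrix m (B i)) \<and>
        (\<Sum>i<k. p i) = 1 \<and>
        \<rho> = mat (n * m) (n * m) (\<lambda>rc. \<Sum>i<k. complex_of_real (p i) * kron (A i) (B i) $$ rc))"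

definition sigma1 :: "complex mat" where
  "sigma1 = mat_of_rows_list 2 [[0, 1], [1, 0]]"
definition sigma2 :: "complex mat" where
  "sigma2 = mat_of_rows_list 2 [[0, -\<i>], [\<i>, 0]]"
definition sigma3 :: "complex mat" where
  "sigma3 = mat_of_rows_list 2 [[1, 0], [0, -1]]"

definition lambda1 :: "complex mat" where
  "lambda1 = mat_of_rows_list 4 [[0,1,0,0],[1,0,0,0],[0,0,0,0],[0,0,0,0]]"
definition lambda3 :: "complex mat" where
  "lambda3 = mat_of_rows_list 4 [[1,0,0,0],[0,-1,0,0],[0,0,0,0],[0,0,0,0]]"
definition lambda13 :: "complex mat" where
  "lambda13 = mat_of_rows_list 4 [[0,0,0,0],[0,0,0,0],[0,0,0,1],[0,0,1,0]]"

definition rhoAB :: "real \<Rightarrow> real \<Rightarrow> real \<Rightarrow> complex mat" where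
  "rhoAB t1 t2 t3 =
     (1/8 :: complex) \<cdot>\<^sub>m kron (1\<^sub>m 2) (1\<^sub>m 4) +
     (1/4 :: complex) \<cdot>\<^sub>m
       (complex_of_real t1 \<cdot>\<^sub>m kron sigma1 lambda1 +
        complex_of_real t2 \<cdot>\<^sub>m kron sigma2 lambda13 +
        complex_of_real t3 \<cdot>\<^sub>m kron sigma3 lambda3)"

end

theory Submission
  imports Defs
begin

text \<open>Write t\<mu> = \<alpha>\<mu> \<beta>\<mu>. Averaging the product states
  1/2 (1 + \<Sum>\<mu> \<epsilon>\<mu> \<alpha>\<mu> \<sigma>\<mu>) \<otimes> (1/4 + 1/2 \<Sum>\<mu> \<epsilon>\<mu> \<beta>\<mu> \<Lambda>\<mu>), with \<Lambda> = (\<lambda>1, \<lambda>13, \<lambda>3),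
  over four sign patterns \<epsilon> whose components sum to zero and are pairwise orthogonal kills
  every cross term and leaves exactly rhoAB. The qubit factor is a Hermitian block [[p, z], [cnj z, q]] and the
  four-level factor a direct sum of two such blocks; each block is positive semidefinite once p, q \<ge> 0 and
  |z|^2 \<le> p q; for the qubit factor this is the Bloch-ball condition \<Sum>\<mu> \<alpha>\<mu>^2 \<le> 1, for the
  four-level factor it amounts to \<beta>1^2 + \<beta>3^2 \<le> 1/4 and \<beta>2^2 \<le> 1/4.\<close>

lemma two_mult_le_of_sq_le_mult:
  fixes p q c a b :: real
  assumes "0 \<le> p" "0 \<le> q" "c\<^sup>2 \<le> p * q"
  shows "2 * c * a * b \<le> p * a\<^sup>2 + q * b\<^sup>2"
proof (cases "p = 0")
  case True
  then have "c = 0" using assms(3) by simp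
  with True show ?thesis using assms(2) by simp
next
  case False
  have "p * (p * a\<^sup>2 + q * b\<^sup>2 - 2 * c * a * b) = (p * a - c * b)\<^sup>2 + (p * q - c\<^sup>2) * b\<^sup>2"
    by (simp add: power2_eq_square algebra_simps)
  also have "\<dots> \<ge> 0" using assms(3) by simp
  finally show ?thesis using False assms(1) by (simp add: zero_le_mult_iff)
qed

lemma Re_hermitian_form_2_nonneg:
  fixes p q :: real and z x y :: complex
  assumes "0 \<le> p" "0 \<le> q" "(cmod z)\<^sup>2 \<le> p * q"
  shows "0 \<le> Re (cnj x * of_real p * x + cnj x * z * y + (cnj y * cnj z * x + cnj y * of_real q * y))"
proof -
  have "Re (cnj x * of_real p * x) = p * (cmod x)\<^sup>2" "Re (cnj y * of_real q * y) = q * (cmod y)\<^sup>2"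
    using cmod_power2[of x] cmod_power2[of y] by (simp_all add: power2_eq_square algebra_simps)
  moreover have "Re (cnj y * cnj z * x) = Re (cnj x * z * y)"
    by (simp add: algebra_simps)
  moreover have "- (cmod x * cmod z * cmod y) \<le> Re (cnj x * z * y)"
    using abs_Re_le_cmod[of "cnj x * z * y"] by (simp add: norm_mult)
  moreover have "2 * cmod z * cmod x * cmod y \<le> p * (cmod x)\<^sup>2 + q * (cmod y)\<^sup>2"
    using two_mult_le_of_sq_le_mult[OF assms] .
  ultimately show ?thesis
    unfolding plus_complex.sel by (simp only: mult_ac)
qed

definition herm2 :: "real \<Rightarrow> real \<Rightarrow> complex \<Rightarrow> complex mat" where
  "herm2 p q z = mat_of_rows_list 2 [[of_real p, z], [cnj z, of_real q]]"

definition herm2_blocks :: "real \<Rightarrow> real \<Rightarrow> complex \<Rightarrow> real \<Rightarrow> real \<Rightarrow> complex \<Rightarrow> complex mat" where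
  "herm2_blocks p q z p' q' z' = mat_of_rows_list 4
     [[of_real p, z, 0, 0], [cnj z, of_real q, 0, 0], [0, 0, of_real p', z'], [0, 0, cnj z', of_real q']]"

lemma herm2_carrier: "herm2 p q z \<in> carrier_mat 2 2"
  by (simp add: herm2_def mat_of_rows_list_def numeral_2_eq_2)

lemma herm2_blocks_carrier: "herm2_blocks p q z p' q' z' \<in> carrier_mat 4 4"
  by (simp add: herm2_blocks_def mat_of_rows_list_def numeral_eq_Suc)

lemma lessThan_2: "{..<2::nat} = {0, 1}" by auto
lemma lessThan_4: "{..<4::nat} = {0, 1, 2, 3}" by auto

lemma positive_semidef_herm2:
  assumes "0 \<le> p" "0 \<le> q" "(cmod z)\<^sup>2 \<le> p * q"
  shows "positive_semidef (herm2 p q z)"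
  unfolding positive_semidef_def hermitian_def
proof (intro conjI ballI)
  show "dim_row (herm2 p q z) = dim_col (herm2 p q z)"
    using herm2_carrier[of p q z] by auto
  show "\<forall>i<dim_row (herm2 p q z). \<forall>j<dim_col (herm2 p q z). herm2 p q z $$ (j, i) = cnj (herm2 p q z $$ (i, j))"
    by (auto simp: herm2_def mat_of_rows_list_def less_Suc_eq numeral_2_eq_2)
  fix v :: "complex vec"
  show "0 \<le> Re (\<Sum>i<dim_row (herm2 p q z). \<Sum>j<dim_row (herm2 p q z). cnj (v $ i) * herm2 p q z $$ (i, j) * v $ j)"
    using Re_hermitian_form_2_nonneg[OF assms, of "v $ 0" "v $ 1"]
    by (simp add: herm2_def mat_of_rows_list_def lessThan_2)
qed

lemma positive_semidef_herm2_blocks: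
  assumes "0 \<le> p" "0 \<le> q" "(cmod z)\<^sup>2 \<le> p * q" and "0 \<le> p'" "0 \<le> q'" "(cmod z')\<^sup>2 \<le> p' * q'"
  shows "positive_semidef (herm2_blocks p q z p' q' z')"
  unfolding positive_semidef_def hermitian_def
proof (intro conjI ballI)
  let ?M = "herm2_blocks p q z p' q' z'"
  show "dim_row ?M = dim_col ?M"
    using herm2_blocks_carrier[of p q z p' q' z'] by auto
  show "\<forall>i<dim_row ?M. \<forall>j<dim_col ?M. ?M $$ (j, i) = cnj (?M $$ (i, j))"
    by (auto simp: herm2_blocks_def mat_of_rows_list_def less_Suc_eq numeral_eq_Suc)
  fix v :: "complex vec"
  show "0 \<le> Re (\<Sum>i<dim_row ?M. \<Sum>j<dim_row ?M. cnj (v $ i) * ?M $$ (i, j) * v $ j)"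
    using add_nonneg_nonneg[OF Re_hermitian_form_2_nonneg[OF assms(1-3), of "v $ 0" "v $ 1"]
                               Re_hermitian_form_2_nonneg[OF assms(4-6), of "v $ 2" "v $ 3"]]
    by (simp add: herm2_blocks_def mat_of_rows_list_def lessThan_4 numeral_2_eq_2 numeral_3_eq_3)
qed

lemma mat_trace_herm2: "mat_trace (herm2 p q z) = of_real (p + q)"
  by (simp add: mat_trace_def herm2_def mat_of_rows_list_def lessThan_2)

lemma mat_trace_herm2_blocks: "mat_trace (herm2_blocks p q z p' q' z') = of_real (p + q + p' + q')"
  by (simp add: mat_trace_def herm2_blocks_def mat_of_rows_list_def lessThan_4)

lemma density_matrix_herm2:
  assumes "0 \<le> p" "0 \<le> q" "(cmod z)\<^sup>2 \<le> p * q" "p + q = 1"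
  shows "density_matrix 2 (herm2 p q z)"
  using assms by (simp add: density_matrix_def herm2_carrier positive_semidef_herm2 mat_trace_herm2)

lemma density_matrix_herm2_blocks:
  assumes "0 \<le> p" "0 \<le> q" "(cmod z)\<^sup>2 \<le> p * q" and "0 \<le> p'" "0 \<le> q'" "(cmod z')\<^sup>2 \<le> p' * q'"
    and "p + q + p' + q' = 1"
  shows "density_matrix 4 (herm2_blocks p q z p' q' z')"
  using assms
  by (simp add: density_matrix_def herm2_blocks_carrier positive_semidef_herm2_blocks mat_trace_herm2_blocks)

text \<open>The qubit state 1/2 (1 + x1 sigma1 + x2 sigma2 + x3 sigma3) and the state
  1/4 1 + 1/2 (y1 lambda1 + y2 lambda13 + y3 lambda3) on C^4, written out entrywise.\<close>
definition bloch_qubit :: "real \<Rightarrow> real \<Rightarrow> real \<Rightarrow> complex mat" where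
  "bloch_qubit x1 x2 x3 = herm2 ((1 + x3) / 2) ((1 - x3) / 2) (Complex (x1 / 2) (- x2 / 2))"

definition gell_mann_state :: "real \<Rightarrow> real \<Rightarrow> real \<Rightarrow> complex mat" where
  "gell_mann_state y1 y2 y3 =
     herm2_blocks (1/4 + y3 / 2) (1/4 - y3 / 2) (of_real (y1 / 2)) (1/4) (1/4) (of_real (y2 / 2))"

lemma density_matrix_bloch_qubit:
  fixes x1 x2 x3 :: real
  assumes "x1\<^sup>2 + x2\<^sup>2 + x3\<^sup>2 \<le> 1"
  shows "density_matrix 2 (bloch_qubit x1 x2 x3)"
proof -
  have "x3\<^sup>2 \<le> 1" using assms zero_le_power2[of x1] zero_le_power2[of x2] by linarith
  then have "\<bar>x3\<bar> \<le> 1" by (simp add: abs_square_le_1)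
  moreover have "(cmod (Complex (x1 / 2) (- x2 / 2)))\<^sup>2 \<le> (1 + x3) / 2 * ((1 - x3) / 2)"
    unfolding cmod_power2 using assms by (simp add: power2_eq_square field_simps)
  ultimately show ?thesis
    unfolding bloch_qubit_def by (intro density_matrix_herm2) (auto simp: field_simps)
qed

lemma density_matrix_gell_mann_state:
  fixes y1 y2 y3 :: real
  assumes "y1\<^sup>2 + y3\<^sup>2 \<le> 1/4" "y2\<^sup>2 \<le> 1/4"
  shows "density_matrix 4 (gell_mann_state y1 y2 y3)"
proof -
  have "y3\<^sup>2 \<le> 1/4" using assms(1) zero_le_power2[of y1] by linarith
  then have "y3\<^sup>2 \<le> (1/2)\<^sup>2" by (simp add: power_divide)
  then have "\<bar>y3\<bar> \<le> 1/2" using abs_le_square_iff[of y3 "1/2"] by simp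
  moreover have "(cmod (of_real (y1 / 2)))\<^sup>2 \<le> (1/4 + y3 / 2) * (1/4 - y3 / 2)"
    using assms(1) by (simp add: power2_eq_square field_simps)
  moreover have "(cmod (of_real (y2 / 2)))\<^sup>2 \<le> 1/4 * (1/4 :: real)"
    using assms(2) by (simp add: power2_eq_square field_simps)
  ultimately show ?thesis
    unfolding gell_mann_state_def by (intro density_matrix_herm2_blocks) auto
qed

text \<open>Patterns are indexed from 0: eps\<mu> i is the \<mu>-th component of the paper's \<epsilon>^(i+1).\<close>
definition eps1 :: "nat \<Rightarrow> real" where "eps1 i = [1, -1, -1, 1] ! i"
definition eps2 :: "nat \<Rightarrow> real" where "eps2 i = [-1, -1, 1, 1] ! i"
definition eps3 :: "nat \<Rightarrow> real" where "eps3 i = [-1, 1, -1, 1] ! i"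

lemma eps_squared: "i < 4 \<Longrightarrow> (eps1 i)\<^sup>2 = 1 \<and> (eps2 i)\<^sup>2 = 1 \<and> (eps3 i)\<^sup>2 = 1"
  by (auto simp: eps1_def eps2_def eps3_def less_Suc_eq numeral_eq_Suc)

definition stateA :: "real \<Rightarrow> real \<Rightarrow> real \<Rightarrow> nat \<Rightarrow> complex mat" where
  "stateA a1 a2 a3 i = bloch_qubit (eps1 i * a1) (eps2 i * a2) (eps3 i * a3)"

definition stateB :: "real \<Rightarrow> real \<Rightarrow> real \<Rightarrow> nat \<Rightarrow> complex mat" where
  "stateB b1 b2 b3 i = gell_mann_state (eps1 i * b1) (eps2 i * b2) (eps3 i * b3)"

lemma kron_2_4_index:
  assumes "A \<in> carrier_mat 2 2" "B \<in> carrier_mat 4 4" "r < 8" "c < 8"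
  shows "kron A B $$ (r, c) = A $$ (r div 4, c div 4) * B $$ (r mod 4, c mod 4)"
  using assms by (simp add: kron_def)

lemma kron_carrier: "A \<in> carrier_mat n n \<Longrightarrow> B \<in> carrier_mat m m \<Longrightarrow> kron A B \<in> carrier_mat (n * m) (n * m)"
  by (simp add: kron_def carrier_matD)

lemma pauli_gell_mann_carrier:
  "sigma1 \<in> carrier_mat 2 2" "sigma2 \<in> carrier_mat 2 2" "sigma3 \<in> carrier_mat 2 2"
  "lambda1 \<in> carrier_mat 4 4" "lambda3 \<in> carrier_mat 4 4" "lambda13 \<in> carrier_mat 4 4"
  by (simp_all add: sigma1_def sigma2_def sigma3_def lambda1_def lambda3_def lambda13_def
      mat_of_rows_list_def numeral_eq_Suc)

lemma state_carrier: "stateA a1 a2 a3 i \<in> carrier_mat 2 2" "stateB b1 b2 b3 i \<in> carrier_mat 4 4"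
  by (simp_all add: stateA_def stateB_def bloch_qubit_def gell_mann_state_def
      herm2_carrier herm2_blocks_carrier)

lemma rhoAB_decomposition_entry:
  assumes "i < 2" "j < 2" "k < 4" "l < 4"
  shows "1/8 * (1\<^sub>m 2 $$ (i, j) * 1\<^sub>m 4 $$ (k, l)) +
      1/4 * (complex_of_real (a1 * b1) * (sigma1 $$ (i, j) * lambda1 $$ (k, l))
           + complex_of_real (a2 * b2) * (sigma2 $$ (i, j) * lambda13 $$ (k, l))
           + complex_of_real (a3 * b3) * (sigma3 $$ (i, j) * lambda3 $$ (k, l)))
    = (\<Sum>n<4. complex_of_real (1/4) * (stateA a1 a2 a3 n $$ (i, j) * stateB b1 b2 b3 n $$ (k, l)))"
proof -
  have "i \<in> {0, 1}" "j \<in> {0, 1}" "k \<in> {0, 1, 2, 3}" "l \<in> {0, 1, 2, 3}"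
    using assms by auto
  then show ?thesis
    by (auto simp: lessThan_4 sigma1_def sigma2_def sigma3_def lambda1_def lambda3_def lambda13_def
        mat_of_rows_list_def stateA_def stateB_def bloch_qubit_def gell_mann_state_def
        herm2_def herm2_blocks_def eps1_def eps2_def eps3_def field_simps Complex_eq)
qed

lemma rhoAB_eq_sum_of_products:
  "rhoAB (a1 * b1) (a2 * b2) (a3 * b3) =
     mat (2 * 4) (2 * 4) (\<lambda>rc. \<Sum>i<4. complex_of_real (1/4) * kron (stateA a1 a2 a3 i) (stateB b1 b2 b3 i) $$ rc)"
    (is "?lhs = ?rhs")
proof (rule eq_matI)
  have kron_8: "kron A B \<in> carrier_mat 8 8" if "A \<in> carrier_mat 2 2" "B \<in> carrier_mat 4 4" for A B
    using kron_carrier[OF that] by simp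
  have "?lhs \<in> carrier_mat 8 8"
    unfolding rhoAB_def
    by (intro add_carrier_mat smult_carrier_mat kron_8 pauli_gell_mann_carrier one_carrier_mat)
  then show "dim_row ?lhs = dim_row ?rhs" "dim_col ?lhs = dim_col ?rhs"
    by auto
  fix r c
  assume "r < dim_row ?rhs" "c < dim_col ?rhs"
  then have r: "r < 8" and c: "c < 8" by auto
  then have "r div 4 < 2" "c div 4 < 2" "r mod 4 < 4" "c mod 4 < 4" by auto
  note carriers = pauli_gell_mann_carrier kron_8[OF one_carrier_mat one_carrier_mat]
    kron_8[OF pauli_gell_mann_carrier(1,4)] kron_8[OF pauli_gell_mann_carrier(2,6)]
    kron_8[OF pauli_gell_mann_carrier(3,5)]
  have "?lhs $$ (r, c) =
     1/8 * (1\<^sub>m 2 $$ (r div 4, c div 4) * 1\<^sub>m 4 $$ (r mod 4, c mod 4)) +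
     1/4 * (complex_of_real (a1 * b1) * (sigma1 $$ (r div 4, c div 4) * lambda1 $$ (r mod 4, c mod 4))
          + complex_of_real (a2 * b2) * (sigma2 $$ (r div 4, c div 4) * lambda13 $$ (r mod 4, c mod 4))
          + complex_of_real (a3 * b3) * (sigma3 $$ (r div 4, c div 4) * lambda3 $$ (r mod 4, c mod 4)))"
    using r c carriers by (simp add: rhoAB_def kron_2_4_index[OF _ _ r c] del: one_mat_def)
  also have "\<dots> = (\<Sum>i<4. complex_of_real (1/4) *
      (stateA a1 a2 a3 i $$ (r div 4, c div 4) * stateB b1 b2 b3 i $$ (r mod 4, c mod 4)))"
    by (rule rhoAB_decomposition_entry) fact+
  also have "\<dots> = ?rhs $$ (r, c)"
    using r c by (simp add: kron_2_4_index[OF state_carrier r c])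
  finally show "?lhs $$ (r, c) = ?rhs $$ (r, c)" .
qed

lemma separable_rhoAB_product_parameters:
  assumes "a1\<^sup>2 + a2\<^sup>2 + a3\<^sup>2 \<le> 1" "b1\<^sup>2 + b3\<^sup>2 \<le> 1/4" "b2\<^sup>2 \<le> 1/4"
  shows "separable 2 4 (rhoAB (a1 * b1) (a2 * b2) (a3 * b3))"
proof -
  have "density_matrix 2 (stateA a1 a2 a3 i) \<and> density_matrix 4 (stateB b1 b2 b3 i)" if "i < 4" for i
    using eps_squared[OF that] assms unfolding stateA_def stateB_def
    by (auto intro!: density_matrix_bloch_qubit density_matrix_gell_mann_state simp: power_mult_distrib)
  then show ?thesis
    unfolding separable_def rhoAB_eq_sum_of_products
    by (intro exI[of _ 4] exI[of _ "\<lambda>_. 1/4"] exI[of _ "stateA a1 a2 a3"] exI[of _ "stateB b1 b2 b3"])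
      (simp add: lessThan_4)
qed

theorem mainTheorem4:
  fixes t1 t2 t3 :: real
  assumes "\<exists>a1 a2 a3 :: real. a1 \<noteq> 0 \<and> a2 \<noteq> 0 \<and> a3 \<noteq> 0 \<and>
             a1\<^sup>2 + a2\<^sup>2 + a3\<^sup>2 \<le> 1 \<and>
             t1\<^sup>2 / a1\<^sup>2 + t3\<^sup>2 / a3\<^sup>2 \<le> 1/4 \<and>
             t2\<^sup>2 / a2\<^sup>2 \<le> 1/4"
  shows "separable 2 4 (rhoAB t1 t2 t3)"
proof -
  obtain a1 a2 a3 :: real where nonzero: "a1 \<noteq> 0" "a2 \<noteq> 0" "a3 \<noteq> 0"
    and bounds: "a1\<^sup>2 + a2\<^sup>2 + a3\<^sup>2 \<le> 1" "t1\<^sup>2 / a1\<^sup>2 + t3\<^sup>2 / a3\<^sup>2 \<le> 1/4" "t2\<^sup>2 / a2\<^sup>2 \<le> 1/4"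
    using assms by blast
  have "separable 2 4 (rhoAB (a1 * (t1 / a1)) (a2 * (t2 / a2)) (a3 * (t3 / a3)))"
    using bounds by (intro separable_rhoAB_product_parameters) (simp_all add: power_divide)
  then show ?thesis
    using nonzero by simp
qed

end
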